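(* Run the ECP algorithm with budget $n$ on a Lipschitz function $f$. Let $$v=\left\lceil\frac{1}{d}\log_{\tau_{n,d}}\!\left(\frac{2n(\sqrt{\pi}\,\Delta)^d}{\varepsilon_1^d\,\Gamma(d/2+1)\,\lambda(\mathcal{X})}\right)\right\rceil,$$ which depends only on $n$, $d$ (and the fixed problem/algorithm constants), not on the iteration $t$. Then in any iteration $t\in\{1,\dots,n\}$, once $\varepsilon_t$ has been increased $v$ times by the growth condition within that iteration, a candidate drawn uniformly from $\mathcal{X}$ is accepted with probability at least $1/2$.
   Context: Setting: $\mathcal{X}\subset\mathbb{R}^d$ is convex, compact with non-empty interior; $f:\mathcal{X}\to\mathbb{R}$ is Lipschitz. $\Delta=\max_{\mathcal{X}}f-\min_{\mathcal{X}}f$, $\lambda$ is Lebesgue measure, $\Gamma$ the Gamma function. For evaluated points $x_1,\dots,x_t$ and $\varepsilon>0$, $\mathcal{A}_{\varepsilon,t}=\{x\in\mathcal{X}: \min_{i\le t}(f(x_i)+\varepsilon\|x-x_i\|_2)\ge\max_{j\le t}f(x_j)\}$. ECP algorithm. Inputs: budget $n\in\mathbb{N}^\star$, $\varepsilon_1>0$, a coefficient $\tau_{n,d}>1$ (a non-decreasing function of $n$ and $d$), a constant $C>1$. Draw $x_1\sim\mathcal{U}(\mathcal{X})$ and evaluate $f(x_1)$; set $t=1$, $h_1=1$, $h_2=0$. While $t<n$: draw a fresh candidate $x_{t+1}\sim\mathcal{U}(\mathcal{X})$ and set $h_{t+1}\leftarrow h_{t+1}+1$; if $h_{t+1}-h_t>C$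 (growth condition), set $\varepsilon_t\leftarrow\tau_{n,d}\varepsilon_t$ and $h_{t+1}\leftarrow0$; if $x_{t+1}\in\mathcal{A}_{\varepsilon_t,t}$ (acceptance condition), evaluate $f(x_{t+1})$, set $t\leftarrow t+1$, then $h_t\leftarrow h_{t+1}$, $\varepsilon_{t+1}\leftarrow\tau_{n,d}\varepsilon_t$, $h_{t+1}\leftarrow0$. Output $x_{\hat i}$ with $\hat i\in\arg\max_{i\le n}f(x_i)$. "Iteration $t$" is the phase in which the algorithm seeks $x_{t+1}$, with current parameter $\varepsilon_t$. *)

theory Defs
  imports "HOL-Analysis.Analysis"
begin

definition ecp_acc_set :: "('a::euclidean_space \<Rightarrow> real) \<Rightarrow> 'a set \<Rightarrow> real \<Rightarrow> 'a list \<Rightarrow> 'a set" where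
  "ecp_acc_set f X eps xs =
     {x \<in> X. Min ((\<lambda>y. f y + eps * norm (x - y)) ` set xs) \<ge> Max (f ` set xs)}"

text \<open>Algorithm state at the top of the while loop:
  (evaluated points x_1..x_t, current eps_t, h_t, h_{t+1}, number of growth increases
   of eps_t performed so far within the current iteration t).\<close>
type_synonym 'a ecp_state = "'a list \<times> real \<times> nat \<times> nat \<times> nat"

text \<open>Counter update and growth condition (deterministic part of one loop pass;
  the fresh candidate is independent of it).\<close>
definition ecp_growth :: "real \<Rightarrow> real \<Rightarrow> 'a ecp_state \<Rightarrow> 'a ecp_state" where
  "ecp_growth C tau = (\<lambda>(xs, e, hp, hc, g).
     if real (hc + 1) - real hp > C then (xs, tau * e, hp, 0, g + 1)
     else (xs, e, hp, hc + 1, g))"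

inductive ecp_loop_state ::
  "('a::euclidean_space \<Rightarrow> real) \<Rightarrow> 'a set \<Rightarrow> nat \<Rightarrow> real \<Rightarrow> real \<Rightarrow> real \<Rightarrow> 'a ecp_state \<Rightarrow> bool"
  for f X n eps1 tau C where
  init: "x1 \<in> X \<Longrightarrow> ecp_loop_state f X n eps1 tau C ([x1], eps1, 1, 0, 0)"
| accept: "\<lbrakk> ecp_loop_state f X n eps1 tau C s; length (fst s) < n;
             ecp_growth C tau s = (xs, e, hp, hc, g); y \<in> X; y \<in> ecp_acc_set f X e xs \<rbrakk>
           \<Longrightarrow> ecp_loop_state f X n eps1 tau C (xs @ [y], tau * e, hc, 0, 0)"
| reject: "\<lbrakk> ecp_loop_state f X n eps1 tau C s; length (fst s) < n;
             ecp_growth C tau s = (xs, e, hp, hc, g); y \<in> X; y \<notin> ecp_acc_set f X e xs \<rbrakk>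
           \<Longrightarrow> ecp_loop_state f X n eps1 tau C (xs, e, hp, hc, g)"

end

theory Submission
  imports Defs
begin

text \<open>After \<open>g\<close> growth steps in the current iteration, \<open>\<epsilon> \<ge> \<epsilon>\<^sub>1 \<tau>\<^sup>g\<close>. A candidate \<open>x\<close> is
  rejected exactly when \<open>f(x\<^sub>i) + \<epsilon> \<parallel>x - x\<^sub>i\<parallel> < max\<^sub>j f(x\<^sub>j)\<close> for some evaluated \<open>x\<^sub>i\<close>, i.e. when
  it lies in the ball around \<open>x\<^sub>i\<close> of radius \<open>(max\<^sub>j f(x\<^sub>j) - f(x\<^sub>i))/\<epsilon> \<le> \<Delta>/\<epsilon>\<close>. Fewer than \<open>n\<close>
  such balls cover the rejection region, so its volume is at most
  \<open>n \<pi>\<^sup>d\<^sup>/\<^sup>2 \<Gamma>(d/2+1)\<^sup>-\<^sup>1 (\<Delta>/\<epsilon>)\<^sup>d\<close>, and the choice of \<open>v\<close> makes this at most \<open>\<lambda>(\<X>)/2\<close>.\<close>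

lemma ecp_growth_points: "fst (ecp_growth C tau s) = fst s"
  by (cases s) (simp add: ecp_growth_def)

definition ecp_invariant :: "'a::euclidean_space set \<Rightarrow> real \<Rightarrow> real \<Rightarrow> 'a ecp_state \<Rightarrow> bool" where
  "ecp_invariant X eps1 tau =
     (\<lambda>(xs, e, _, _, g). xs \<noteq> [] \<and> set xs \<subseteq> X \<and> eps1 * tau ^ g \<le> e)"

lemma ecp_invariant_growth:
  assumes "ecp_invariant X eps1 tau s" and "tau > 1" and "eps1 > 0"
  shows "ecp_invariant X eps1 tau (ecp_growth C tau s)"
proof -
  obtain xs e hp hc g where s: "s = (xs, e, hp, hc, g)" by (cases s) auto
  have "tau * (eps1 * tau ^ g) \<le> tau * e" if "eps1 * tau ^ g \<le> e"
    using that assms(2) by simp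
  then show ?thesis
    using assms unfolding s ecp_invariant_def ecp_growth_def by (auto simp: algebra_simps)
qed

lemma ecp_loop_state_invariant:
  assumes "ecp_loop_state f X n eps1 tau C s" and "tau > 1" and "eps1 > 0"
  shows "ecp_invariant X eps1 tau s"
  using assms(1)
proof induction
  case (init x1)
  then show ?case by (simp add: ecp_invariant_def)
next
  case (accept s xs e hp hc g y)
  then have "ecp_invariant X eps1 tau (xs, e, hp, hc, g)"
    using ecp_invariant_growth assms(2,3) by metis
  then have "xs \<noteq> []" "set xs \<subseteq> X" "eps1 * tau ^ g \<le> e"
    by (auto simp: ecp_invariant_def)
  have "0 < eps1 * tau ^ g" using assms(2,3) by simp
  have "eps1 \<le> eps1 * tau ^ g" using assms(2,3) by simp
  also have "\<dots> \<le> e" by fact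
  also have "e \<le> tau * e"
    using assms(2) \<open>0 < eps1 * tau ^ g\<close> \<open>eps1 * tau ^ g \<le> e\<close> by (simp add: mult_le_cancel_right1)
  finally have "eps1 \<le> tau * e" .
  then show ?case
    using accept \<open>xs \<noteq> []\<close> \<open>set xs \<subseteq> X\<close> by (simp add: ecp_invariant_def)
next
  case (reject s xs e hp hc g y)
  then show ?case using ecp_invariant_growth assms(2,3) by metis
qed

lemma ecp_state_after_growth:
  assumes "ecp_loop_state f X n eps1 tau C s" and "length (fst s) < n"
    and "ecp_growth C tau s = (xs, e, hp, hc, g)" and "tau > 1" and "eps1 > 0"
  shows "xs \<noteq> []" and "set xs \<subseteq> X" and "length xs < n"
    and "eps1 * tau ^ g \<le> e" and "e > 0"
proof -
  have "ecp_invariant X eps1 tau (ecp_growth C tau s)"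
    using assms(1,4,5) by (intro ecp_invariant_growth ecp_loop_state_invariant)
  then show "xs \<noteq> []" "set xs \<subseteq> X" and e: "eps1 * tau ^ g \<le> e"
    using assms(3) by (auto simp: ecp_invariant_def)
  show "length xs < n" using assms(2,3) ecp_growth_points by (metis fst_conv)
  have "0 < eps1 * tau ^ g" using assms(4,5) by simp
  then show "e > 0" using e by linarith
qed

lemma ecp_acc_set_eq_Diff_balls:
  assumes "xs \<noteq> []" and "e > 0"
  shows "ecp_acc_set f X e xs =
           X - (\<Union>y\<in>set xs. ball y ((Max (f ` set xs) - f y) / e))"
proof -
  have "Max (f ` set xs) \<le> f y + e * norm (x - y) \<longleftrightarrow>
          x \<notin> ball y ((Max (f ` set xs) - f y) / e)" for x y
    using assms(2)
    by (simp add: dist_norm norm_minus_commute pos_less_divide_eq algebra_simps not_less)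
  then show ?thesis
    using assms(1) unfolding ecp_acc_set_def by (auto simp: Min_ge_iff)
qed

lemma measure_Diff_ecp_acc_set_le:
  fixes f :: "'a::euclidean_space \<Rightarrow> real"
  assumes "X \<in> sets lborel" and "xs \<noteq> []" and "e > 0"
    and "\<And>x y. x \<in> set xs \<Longrightarrow> y \<in> set xs \<Longrightarrow> f x - f y \<le> D"
  shows "measure lborel (X - ecp_acc_set f X e xs)
           \<le> length xs * (unit_ball_vol DIM('a) * (D / e) ^ DIM('a))"
proof -
  define M where "M = Max (f ` set xs)"
  define B where "B y = X \<inter> ball y ((M - f y) / e)" for y
  have "M \<in> f ` set xs" unfolding M_def using assms(2) by simp
  then have radius_le: "(M - f y) / e \<le> D / e" if "y \<in> set xs" for y
    using assms(3,4) that by (auto intro: divide_right_mono)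
  have "D \<ge> 0" using assms(2,4) by (metis diff_self list.set_sel(1))
  have "measure lborel (X - ecp_acc_set f X e xs) = measure lborel (\<Union>y\<in>set xs. B y)"
    unfolding ecp_acc_set_eq_Diff_balls[OF assms(2,3)] B_def M_def by (rule arg_cong) auto
  also have "\<dots> \<le> (\<Sum>y\<in>set xs. measure lborel (B y))"
    using assms(1) unfolding B_def by (intro measure_UNION_le) auto
  also have "\<dots> \<le> (\<Sum>y\<in>set xs. measure lborel (cball y (D / e)))"
  proof (intro sum_mono measure_mono_fmeasurable)
    fix y assume "y \<in> set xs"
    then show "B y \<subseteq> cball y (D / e)" using radius_le unfolding B_def by fastforce
  qed (use assms(1) in \<open>auto simp: B_def intro: fmeasurable_compact\<close>)
  also have "\<dots> = card (set xs) * (unit_ball_vol DIM('a) * (D / e) ^ DIM('a))"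
    using \<open>D \<ge> 0\<close> assms(3) by (simp add: content_cball)
  also have "\<dots> \<le> length xs * (unit_ball_vol DIM('a) * (D / e) ^ DIM('a))"
    using \<open>D \<ge> 0\<close> assms(3) card_length by (intro mult_right_mono) auto
  finally show ?thesis .
qed

lemma measure_uniform_measure_eq_1_minus:
  assumes "X \<in> fmeasurable M" and "measure M X > 0" and "A \<in> sets M"
  shows "measure (uniform_measure M X) A = 1 - measure M (X - A) / measure M X"
proof -
  have "emeasure M X \<noteq> 0" "emeasure M X \<noteq> \<infinity>"
    using assms(1,2) by (auto simp: measure_def fmeasurable_def)
  then have "measure (uniform_measure M X) A = measure M (X - (X - A)) / measure M X"
    using assms(3) by (simp add: Diff_Diff_Int)
  also have "\<dots> = (measure M X - measure M (X - A)) / measure M X"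
    using assms(1,3) by (subst measure_Diff) (auto simp: fmeasurable_def)
  finally show ?thesis using assms(2) by (simp add: diff_divide_distrib)
qed

lemma measure_lborel_pos_if_interior_nonempty:
  fixes X :: "'a::euclidean_space set"
  assumes "X \<in> fmeasurable lborel" and "interior X \<noteq> {}"
  shows "measure lborel X > 0"
proof -
  obtain x r where "r > 0" "ball x r \<subseteq> X"
    using assms(2) mem_interior by blast
  then have "measure lborel (ball x r) \<le> measure lborel X"
    using assms(1) by (intro measure_mono_fmeasurable) auto
  moreover have "measure lborel (ball x r) > 0" using \<open>r > 0\<close> by (simp add: content_ball)
  ultimately show ?thesis by linarith
qed

lemma diff_le_SUP_minus_INF:
  fixes f :: "'a \<Rightarrow> real"
  assumes "bounded (f ` X)" and "x \<in> X" and "y \<in> X"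
  shows "f x - f y \<le> (SUP z\<in>X. f z) - (INF z\<in>X. f z)"
proof -
  have "f x \<le> (SUP z\<in>X. f z)"
    using assms by (intro cSUP_upper bounded_imp_bdd_above)
  moreover have "(INF z\<in>X. f z) \<le> f y"
    using assms by (intro cINF_lower bounded_imp_bdd_below)
  ultimately show ?thesis by linarith
qed

lemma le_power_if_ceiling_log_le:
  fixes T A :: real and d g :: nat
  assumes "T > 1" and "d > 0" and "\<lceil>(1 / real d) * log T A\<rceil> \<le> int g"
  shows "A \<le> (T ^ g) ^ d"
proof (cases "A > 0")
  case True
  have "(1 / real d) * log T A \<le> real g"
    using assms(3) by (simp add: ceiling_le_iff)
  then have "log T A \<le> real d * real g"
    using assms(2) by (simp add: divide_le_eq mult.commute)
  then have "A \<le> T powr (real (g * d))"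
    using log_le_iff[OF assms(1) True] by (simp add: mult.commute)
  also have "\<dots> = (T ^ g) ^ d"
    using assms(1) by (simp only: powr_realpow power_mult)
  finally show ?thesis .
next
  case False
  moreover have "(T ^ g) ^ d > 0" using assms(1) by simp
  ultimately show ?thesis by linarith
qed

lemma ecp_rejection_volume_le_half:
  fixes d g n :: nat and T eps1 lam D e :: real
  assumes "d > 0" and "T > 1" and "eps1 > 0" and "lam > 0" and "D \<ge> 0"
    and "eps1 * T ^ g \<le> e"
    and "\<lceil>(1 / real d) * log T
           (2 * real n * (sqrt pi * D) ^ d / (eps1 ^ d * Gamma (real d / 2 + 1) * lam))\<rceil> \<le> int g"
  shows "real n * (unit_ball_vol d * (D / e) ^ d) \<le> lam / 2"
proof -
  define Gm where "Gm = Gamma (real d / 2 + 1)"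
  have "Gm > 0" unfolding Gm_def by (intro Gamma_real_pos) simp
  have "0 < eps1 * T ^ g" using assms(2,3) by simp
  then have "e > 0" using assms(6) by linarith
  have sqrt_pi_power: "sqrt pi ^ d = pi powr (real d / 2)"
    by (simp add: powr_half_sqrt[symmetric] powr_realpow[symmetric] powr_powr)
  have "2 * real n * (sqrt pi * D) ^ d / (eps1 ^ d * Gm * lam) \<le> (T ^ g) ^ d"
    using le_power_if_ceiling_log_le[OF assms(2,1)] assms(7) unfolding Gm_def .
  then have "2 * real n * (sqrt pi * D) ^ d \<le> (eps1 * T ^ g) ^ d * Gm * lam"
    using assms(3,4) \<open>Gm > 0\<close> by (simp add: divide_le_eq power_mult_distrib algebra_simps)
  also have "\<dots> \<le> e ^ d * Gm * lam"
    using assms(2-4,6) \<open>Gm > 0\<close> by (intro mult_right_mono power_mono) auto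
  finally have "real n * (pi powr (real d / 2) * D ^ d) \<le> lam / 2 * (Gm * e ^ d)"
    by (simp add: sqrt_pi_power power_mult_distrib algebra_simps)
  then show ?thesis
    using \<open>Gm > 0\<close> \<open>e > 0\<close>
    by (simp add: unit_ball_vol_def Gm_def power_divide field_simps)
qed

theorem corollary1:
  fixes f :: "'a::euclidean_space \<Rightarrow> real" and X :: "'a set"
    and n :: nat and eps1 C :: real and tau :: "nat \<Rightarrow> nat \<Rightarrow> real"
    and s :: "'a ecp_state" and xs :: "'a list" and e :: real and hp hc g :: nat
  assumes "convex X" and "compact X" and "interior X \<noteq> {}"
    and "\<exists>L. L-lipschitz_on X f"
    and "n \<ge> 1" and "eps1 > 0" and "C > 1"
    and "\<forall>m k. tau m k > 1"
    and "\<forall>m m' k k'. m \<le> m' \<longrightarrow> k \<le> k' \<longrightarrow> tau m k \<le> tau m' k'"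
    and "ecp_loop_state f X n eps1 (tau n DIM('a)) C s"
    and "length (fst s) < n"
    and "ecp_growth C (tau n DIM('a)) s = (xs, e, hp, hc, g)"
    and "int g \<ge> \<lceil>(1 / real DIM('a)) * log (tau n DIM('a))
           (2 * real n * (sqrt pi * ((SUP x\<in>X. f x) - (INF x\<in>X. f x))) ^ DIM('a)
            / (eps1 ^ DIM('a) * Gamma (real DIM('a) / 2 + 1) * measure lborel X))\<rceil>"
  shows "measure (uniform_measure lborel X) (ecp_acc_set f X e xs) \<ge> 1 / 2"
proof -
  define T where "T = tau n DIM('a)"
  define D where "D = (SUP x\<in>X. f x) - (INF x\<in>X. f x)"
  define lam where "lam = measure lborel X"
  have "T > 1" using assms(8) by (simp add: T_def)
  note state = ecp_state_after_growth[OF assms(10,11,12)[folded T_def] \<open>T > 1\<close> assms(6)]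
  have X: "X \<in> fmeasurable lborel" using assms(2) by (rule fmeasurable_compact)
  then have "lam > 0" using assms(3) unfolding lam_def by (rule measure_lborel_pos_if_interior_nonempty)
  obtain L where "L-lipschitz_on X f" using assms(4) by blast
  then have "bounded (f ` X)"
    using assms(2) by (intro compact_imp_bounded compact_continuous_image lipschitz_on_continuous_on)
  then have spread: "f x - f y \<le> D" if "x \<in> set xs" "y \<in> set xs" for x y
    using that state(2) unfolding D_def by (intro diff_le_SUP_minus_INF) auto
  then have "D \<ge> 0" using state(1) by (metis diff_self list.set_sel(1))
  have "measure lborel (X - ecp_acc_set f X e xs)
          \<le> length xs * (unit_ball_vol DIM('a) * (D / e) ^ DIM('a))"
    using X state(1,5) spread by (intro measure_Diff_ecp_acc_set_le) auto
  also have "\<dots> \<le> n * (unit_ball_vol DIM('a) * (D / e) ^ DIM('a))"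
    using state(3,5) \<open>D \<ge> 0\<close> by (intro mult_right_mono) auto
  also have "\<dots> \<le> lam / 2"
    using assms(6,13) \<open>T > 1\<close> \<open>lam > 0\<close> \<open>D \<ge> 0\<close> state(4) unfolding T_def D_def lam_def
    by (intro ecp_rejection_volume_le_half) auto
  finally have rejected: "measure lborel (X - ecp_acc_set f X e xs) \<le> lam / 2" .
  have "ecp_acc_set f X e xs \<in> sets lborel"
    using X unfolding ecp_acc_set_eq_Diff_balls[OF state(1,5)]
    by (intro sets.Diff) (auto simp: sets_lborel intro: borel_open)
  then show ?thesis
    using X \<open>lam > 0\<close> rejected
    by (simp add: measure_uniform_measure_eq_1_minus lam_def field_simps)
qed

end
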